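(* For each integer $r\ge3$, $\lambda(\mathbb T(y;r))\sim\dfrac{y^{r-1}}{(r-y)^{r-1}}$ as $y\to0^+$.
   Context: For an integer $r\ge 3$ and $y\in[0,1]$, set $L_y:=1/(r-y)$, let $\mathbb T=(\mathbb R/\mathbb Z)^r$ with normalized Lebesgue (Haar) measure $\lambda$, and let $\mathbb T(y;r)$ be the set of $x=(x_1,\dots,x_r)\in\mathbb T$ such that the arcs $x_t+[0,L_y]$, $1\le t\le r$, cover $\mathbb R/\mathbb Z$. *)

theory Defs
  imports "HOL-Analysis.Analysis" "HOL-Library.Landau_Symbols"
begin

text \<open>The torus (R/Z)^r is represented by the fundamental domain [0,1)^r inside real^'n,
  with r = CARD('n); normalized Haar measure = Lebesgue measure restricted to this cube
  (which has volume 1).\<close>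

definition arc_len :: "nat \<Rightarrow> real \<Rightarrow> real" where
  "arc_len r y = 1 / (real r - y)"

text \<open>The arc x_t + [0,L] (mod 1) contains the point z (mod 1) iff frac(z - x_t) \<le> L
  (for 0 \<le> L < 1). The arcs cover R/Z iff every real z lies in one of them.\<close>

definition arcs_cover :: "real \<Rightarrow> real^'n \<Rightarrow> bool" where
  "arcs_cover L x \<longleftrightarrow> (\<forall>z::real. \<exists>t. \<exists>s. 0 \<le> s \<and> s \<le> L \<and> (z - (x $ t + s)) \<in> \<int>)"

definition torus_cover_set :: "real \<Rightarrow> (real^'n) set" where
  "torus_cover_set y = {x. (\<forall>t. 0 \<le> x $ t \<and> x $ t < 1) \<and> arcs_cover (arc_len CARD('n) y) x}"

end

theory Submission
  imports Defs
begin

text \<open>For \<open>0 \<le> y < 1\<close> the measure is exactly \<open>(r L - 1)^(r - 1) = (y / (r - y))^(r - 1)\<close>,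
  where \<open>L = 1 / (r - y)\<close>. By Fubini and the rotation invariance of the torus one point may be
  fixed at \<open>0\<close>. The remaining \<open>r - 1\<close> points of \<open>[0, 1)\<close> cover the circle together with \<open>0\<close> iff,
  walking up from \<open>0\<close>, all gaps between consecutive points and the final gap to \<open>1\<close> are at most
  \<open>L\<close>. Conditioning on the largest point and inducting on the number of points shows that the
  configurations of \<open>n\<close> points in an interval of length \<open>s \<ge> n L\<close> with this property have volume
  \<open>((n + 1) L - s)^n\<close>.\<close>

section \<open>Covering the circle by arcs\<close>

definition arcs_cover_circle :: "real \<Rightarrow> real set \<Rightarrow> bool" where
  "arcs_cover_circle L P \<longleftrightarrow> (\<forall>z. \<exists>p\<in>P. \<exists>s. 0 \<le> s \<and> s \<le> L \<and> z - (p + s) \<in> \<int>)"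

lemma arcs_cover_iff_arcs_cover_circle: "arcs_cover L x \<longleftrightarrow> arcs_cover_circle L (range (($) x))"
  unfolding arcs_cover_def arcs_cover_circle_def by auto

lemma arcs_cover_circle_frac_shift:
  "arcs_cover_circle L ((\<lambda>p. frac (p - a)) ` P) \<longleftrightarrow> arcs_cover_circle L P"
proof -
  have Ints: "z - (frac (p - a) + s) \<in> \<int> \<longleftrightarrow> (z + a) - (p + s) \<in> \<int>" for z p s
  proof -
    have "z - (frac (p - a) + s) = (z + a) - (p + s) + of_int \<lfloor>p - a\<rfloor>"
      by (simp add: frac_def)
    then show ?thesis
      by (metis Ints_add Ints_diff Ints_of_int add_diff_cancel_right')
  qed
  have shift: "(\<forall>z. R (z + a)) \<longleftrightarrow> (\<forall>z. R z)" for R :: "real \<Rightarrow> bool"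
    by (metis diff_add_cancel)
  show ?thesis
    unfolding arcs_cover_circle_def
    using shift[of "\<lambda>z. \<exists>p\<in>P. \<exists>s. 0 \<le> s \<and> s \<le> L \<and> z - (p + s) \<in> \<int>"] by (simp add: Ints)
qed

text \<open>When \<open>a = Min P\<close>, \<open>arc_chain L P e\<close> says that the arcs \<open>[p, p + L]\<close>, \<open>p \<in> P\<close>, cover
  \<open>[a, e]\<close>: from every point whose arc ends before \<open>e\<close> the next point is at most \<open>L\<close> away.\<close>

definition arc_chain :: "real \<Rightarrow> real set \<Rightarrow> real \<Rightarrow> bool" where
  "arc_chain L P e \<longleftrightarrow> (\<forall>p\<in>P. p + L < e \<longrightarrow> (\<exists>q\<in>P. p < q \<and> q \<le> p + L))"

lemma arc_chain_if_arcs_cover_circle: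
  assumes P: "finite P" "\<forall>p\<in>P. a \<le> p \<and> p < a + 1" and cover: "arcs_cover_circle L P"
  shows "arc_chain L P (a + 1)"
  unfolding arc_chain_def
proof (intro ballI impI)
  fix p assume p: "p \<in> P" "p + L < a + 1"
  show "\<exists>q\<in>P. p < q \<and> q \<le> p + L"
  proof (rule ccontr)
    assume no_next: "\<not> (\<exists>q\<in>P. p < q \<and> q \<le> p + L)"
    \<comment> \<open>a point \<open>z\<close> just beyond the arc of \<open>p\<close> and before the next point is not covered\<close>
    define m where "m = Min (insert (a + 1) {q\<in>P. p + L < q})"
    have m: "p + L < m" "m \<le> a + 1" "\<forall>q\<in>P. p + L < q \<longrightarrow> m \<le> q"
      using P p unfolding m_def by auto
    define z where "z = (p + L + m) / 2"
    obtain t s where t: "t \<in> P" "0 \<le> s" "s \<le> L" "z - (t + s) \<in> \<int>"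
      using cover unfolding arcs_cover_circle_def by blast
    have z: "p + L < z" "z < m" using m(1) by (auto simp: z_def)
    have "a \<le> p" "a \<le> t" "t < a + 1" using P p(1) t(1) by auto
    then have "\<bar>z - (t + s)\<bar> < 1" using t(2,3) z m(2) by auto
    with t(4) have "z - (t + s) = 0" by (rule Ints_nonzero_abs_less1)
    then have "p < t" "t \<le> z" using t z by auto
    then have "p + L < t" using no_next t(1) by force
    then show False using m t \<open>t \<le> z\<close> z by force
  qed
qed

lemma arcs_cover_circle_if_arc_chain:
  assumes P: "finite P" "a \<in> P" and chain: "arc_chain L P (a + 1)"
  shows "arcs_cover_circle L P"
  unfolding arcs_cover_circle_def
proof
  fix z :: real
  define z' where "z' = z - of_int \<lfloor>z - a\<rfloor>"
  have z': "a \<le> z'" "z' < a + 1" "z - z' \<in> \<int>" unfolding z'_def by linarith+ simp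
  \<comment> \<open>the last point of \<open>P\<close> not beyond \<open>z'\<close> covers it\<close>
  define p where "p = Max {q\<in>P. q \<le> z'}"
  have below: "finite {q\<in>P. q \<le> z'}" "a \<in> {q\<in>P. q \<le> z'}" using P z' by auto
  then have "p \<in> {q\<in>P. q \<le> z'}" unfolding p_def by (intro Max_in) auto
  then have p: "p \<in> P" "p \<le> z'" "\<forall>q\<in>P. q \<le> z' \<longrightarrow> q \<le> p"
    using below unfolding p_def by auto
  have "z' \<le> p + L"
  proof (rule ccontr)
    assume "\<not> z' \<le> p + L"
    then obtain q where "q \<in> P" "p < q" "q \<le> p + L"
      using chain p z' unfolding arc_chain_def by force
    then show False using p \<open>\<not> z' \<le> p + L\<close> by force
  qed
  then show "\<exists>p\<in>P. \<exists>s. 0 \<le> s \<and> s \<le> L \<and> z - (p + s) \<in> \<int>"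
    using p z' by (intro bexI[of _ p] exI[of _ "z' - p"]) auto
qed

lemma arcs_cover_circle_iff_arc_chain:
  assumes "finite P" "a \<in> P" "\<forall>p\<in>P. a \<le> p \<and> p < a + 1"
  shows "arcs_cover_circle L P \<longleftrightarrow> arc_chain L P (a + 1)"
  using assms arc_chain_if_arcs_cover_circle arcs_cover_circle_if_arc_chain by blast

lemma arc_chain_insert_max:
  assumes "\<forall>p\<in>P. p \<le> v" "v \<le> e"
  shows "arc_chain L (insert v P) e \<longleftrightarrow> arc_chain L P v \<and> e \<le> v + L"
proof
  assume chain: "arc_chain L (insert v P) e"
  have "e \<le> v + L"
  proof (rule ccontr)
    assume "\<not> e \<le> v + L"
    then obtain q where "q \<in> insert v P" "v < q" using chain unfolding arc_chain_def by force
    then show False using assms by auto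
  qed
  moreover have "arc_chain L P v" unfolding arc_chain_def
  proof (intro ballI impI)
    fix p assume p: "p \<in> P" "p + L < v"
    then obtain q where q: "q \<in> insert v P" "p < q" "q \<le> p + L"
      using chain assms unfolding arc_chain_def by force
    then show "\<exists>q\<in>P. p < q \<and> q \<le> p + L" using p by auto
  qed
  ultimately show "arc_chain L P v \<and> e \<le> v + L" by simp
next
  assume chain: "arc_chain L P v \<and> e \<le> v + L"
  show "arc_chain L (insert v P) e" unfolding arc_chain_def
  proof (intro ballI impI)
    fix p assume p: "p \<in> insert v P" "p + L < e"
    show "\<exists>q\<in>insert v P. p < q \<and> q \<le> p + L"
    proof (cases "p + L < v")
      case True
      then show ?thesis using chain p unfolding arc_chain_def by auto
    next
      case False
      moreover have "p \<noteq> v" "p \<le> v" using p chain assms by auto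
      ultimately show ?thesis by force
    qed
  qed
qed

lemma pred_arc_chain_insert:
  assumes "finite I"
    and [measurable]: "g \<in> borel_measurable M" "h \<in> borel_measurable M"
      "\<And>i. i \<in> I \<Longrightarrow> (\<lambda>x. f x i) \<in> borel_measurable M"
  shows "Measurable.pred M (\<lambda>x. arc_chain L (insert (g x) (f x ` I)) (h x))"
proof -
  have "arc_chain L (insert (g x) (f x ` I)) (h x) \<longleftrightarrow>
    (g x + L < h x \<longrightarrow> (\<exists>k\<in>I. g x < f x k \<and> f x k \<le> g x + L)) \<and>
    (\<forall>i\<in>I. f x i + L < h x \<longrightarrow> (f x i < g x \<and> g x \<le> f x i + L) \<or>
      (\<exists>k\<in>I. f x i < f x k \<and> f x k \<le> f x i + L))" for x
    unfolding arc_chain_def by auto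
  then show ?thesis using \<open>finite I\<close> by simp measurable
qed

section \<open>Volume of chain configurations\<close>

text \<open>The injective ranking \<open>\<rho>\<close> breaks ties, so that the sets \<open>{u. first_argmax \<rho> I u j}\<close>,
  \<open>j \<in> I\<close>, partition the configurations.\<close>

definition first_argmax :: "('i \<Rightarrow> nat) \<Rightarrow> 'i set \<Rightarrow> ('i \<Rightarrow> real) \<Rightarrow> 'i \<Rightarrow> bool" where
  "first_argmax \<rho> I u j \<longleftrightarrow> (\<forall>i\<in>I. u i \<le> u j \<and> (\<rho> i < \<rho> j \<longrightarrow> u i < u j))"

lemma first_argmax_exists:
  assumes "finite I" "I \<noteq> {}"
  obtains j where "j \<in> I" "first_argmax \<rho> I u j"
proof -
  define M where "M = {j\<in>I. \<forall>i\<in>I. u i \<le> u j}"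
  have "Max (u ` I) \<in> u ` I" using assms by simp
  then obtain j0 where "j0 \<in> I" "u j0 = Max (u ` I)" by auto
  then have "j0 \<in> M" using assms by (simp add: M_def)
  then have "finite M" "M \<noteq> {}" using assms by (auto simp: M_def)
  then obtain j where "is_arg_min \<rho> (\<lambda>j. j \<in> M) j" using ex_is_arg_min_if_finite by blast
  then have "j \<in> I" "first_argmax \<rho> I u j"
    unfolding is_arg_min_linorder first_argmax_def M_def by (auto simp: not_le less_le)
  then show thesis by (rule that)
qed

lemma first_argmax_unique:
  assumes "inj_on \<rho> I" "j \<in> I" "k \<in> I" "first_argmax \<rho> I u j" "first_argmax \<rho> I u k"
  shows "j = k"
  using assms unfolding first_argmax_def inj_on_def by (metis less_le_not_le linorder_neqE_nat)

lemma pred_first_argmax: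
  assumes "finite I" "j \<in> I" "\<And>i. i \<in> I \<Longrightarrow> (\<lambda>x. f x i) \<in> borel_measurable M"
  shows "Measurable.pred M (\<lambda>x. first_argmax \<rho> I (f x) j)"
  unfolding first_argmax_def using assms by measurable

lemma emeasure_PiM_insert_slice:
  fixes I :: "'i set" and X :: "('i \<Rightarrow> real) set" and A :: "real set"
  assumes "finite I" "j \<notin> I" and X: "X \<in> sets (PiM (insert j I) (\<lambda>_. lborel))"
    and [measurable]: "A \<in> sets borel" and Y: "\<And>v. Y v \<in> sets (PiM I (\<lambda>_. lborel))"
    and slice: "\<And>v u. u \<in> space (PiM I (\<lambda>_. lborel)) \<Longrightarrow> u(j := v) \<in> X \<longleftrightarrow> v \<in> A \<and> u \<in> Y v"
  shows "emeasure (PiM (insert j I) (\<lambda>_. lborel)) X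
     = (\<integral>\<^sup>+v. indicator A v * emeasure (PiM I (\<lambda>_. lborel)) (Y v) \<partial>lborel)"
proof -
  interpret product_sigma_finite "\<lambda>_::'i. lborel :: real measure" by standard
  have "emeasure (PiM (insert j I) (\<lambda>_. lborel)) X = (\<integral>\<^sup>+w. indicator X w \<partial>PiM (insert j I) (\<lambda>_. lborel))"
    using X by simp
  also have "\<dots> = (\<integral>\<^sup>+v. \<integral>\<^sup>+u. indicator X (u(j := v)) \<partial>PiM I (\<lambda>_. lborel) \<partial>lborel)"
    using assms by (intro product_nn_integral_insert_rev) auto
  also have "\<dots> = (\<integral>\<^sup>+v. \<integral>\<^sup>+u. indicator A v * indicator (Y v) u \<partial>PiM I (\<lambda>_. lborel) \<partial>lborel)"
    by (intro nn_integral_cong) (simp add: slice indicator_def)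
  also have "\<dots> = (\<integral>\<^sup>+v. indicator A v * (\<integral>\<^sup>+u. indicator (Y v) u \<partial>PiM I (\<lambda>_. lborel)) \<partial>lborel)"
    using Y by (subst nn_integral_cmult) auto
  also have "\<dots> = (\<integral>\<^sup>+v. indicator A v * emeasure (PiM I (\<lambda>_. lborel)) (Y v) \<partial>lborel)"
    using Y by simp
  finally show ?thesis .
qed

definition chain_configs :: "real \<Rightarrow> 'i set \<Rightarrow> ('i \<Rightarrow> real set) \<Rightarrow> real \<Rightarrow> real \<Rightarrow> ('i \<Rightarrow> real) set" where
  "chain_configs L I B a e =
    {u \<in> space (PiM I (\<lambda>_. lborel)). (\<forall>i\<in>I. u i \<in> B i) \<and> arc_chain L (insert a (u ` I)) e}"

lemma sets_chain_configs:
  assumes "finite I" "\<And>i. i \<in> I \<Longrightarrow> B i \<in> sets borel"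
  shows "chain_configs L I B a e \<in> sets (PiM I (\<lambda>_. lborel))"
proof -
  have "Measurable.pred (PiM I (\<lambda>_. lborel)) (\<lambda>u. arc_chain L (insert a (u ` I)) e)"
    using assms(1) by (intro pred_arc_chain_insert) auto
  then show ?thesis unfolding chain_configs_def using assms by measurable
qed

lemma chain_configs_upd_first_argmax_iff:
  assumes "j \<in> I" and B: "\<And>i. i \<in> I \<Longrightarrow> B i \<subseteq> {a..e}"
  shows "(\<forall>i\<in>I. (u(j := v)) i \<in> B i) \<and> first_argmax \<rho> I (u(j := v)) j
           \<and> arc_chain L (insert a (u(j := v) ` I)) e
     \<longleftrightarrow> v \<in> B j \<inter> {e - L..}
           \<and> (\<forall>i\<in>I - {j}. u i \<in> B i \<inter> (if \<rho> i < \<rho> j then {..<v} else {..v}))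
           \<and> arc_chain L (insert a (u ` (I - {j}))) v"
proof -
  let ?below = "\<lambda>i. u i \<le> v \<and> (\<rho> i < \<rho> j \<longrightarrow> u i < v)"
  have argmax: "first_argmax \<rho> I (u(j := v)) j \<longleftrightarrow> (\<forall>i\<in>I - {j}. ?below i)"
    unfolding first_argmax_def
  proof (intro iffI ballI)
    fix i assume "\<forall>k\<in>I. (u(j := v)) k \<le> (u(j := v)) j \<and> (\<rho> k < \<rho> j \<longrightarrow> (u(j := v)) k < (u(j := v)) j)"
      and "i \<in> I - {j}"
    then show "?below i" by (metis DiffD1 DiffD2 fun_upd_other fun_upd_same singletonI)
  next
    fix i assume "\<forall>k\<in>I - {j}. ?below k" "i \<in> I"
    then show "(u(j := v)) i \<le> (u(j := v)) j \<and> (\<rho> i < \<rho> j \<longrightarrow> (u(j := v)) i < (u(j := v)) j)"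
      by (cases "i = j") auto
  qed
  have image: "insert a (u(j := v) ` I) = insert v (insert a (u ` (I - {j})))"
    using \<open>j \<in> I\<close> by auto
  have chain: "arc_chain L (insert v (insert a (u ` (I - {j})))) e
      \<longleftrightarrow> arc_chain L (insert a (u ` (I - {j}))) v \<and> e \<le> v + L"
    if "v \<in> B j" "\<forall>i\<in>I - {j}. ?below i"
  proof (rule arc_chain_insert_max)
    show "\<forall>p\<in>insert a (u ` (I - {j})). p \<le> v" "v \<le> e"
      using that B[OF \<open>j \<in> I\<close>] by auto
  qed
  have B_below: "u i \<in> B i \<inter> (if \<rho> i < \<rho> j then {..<v} else {..v}) \<longleftrightarrow> u i \<in> B i \<and> ?below i" for i
    by (auto simp: not_less)
  show ?thesis
    unfolding argmax image B_below using \<open>j \<in> I\<close> chain by auto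
qed

lemma sets_chain_configs_first_argmax:
  assumes "finite I" "j \<in> I" "\<And>i. i \<in> I \<Longrightarrow> B i \<in> sets borel"
  shows "chain_configs L I B a e \<inter> {u. first_argmax \<rho> I u j} \<in> sets (PiM I (\<lambda>_. lborel))"
proof -
  have "Measurable.pred (PiM I (\<lambda>_. lborel)) (\<lambda>u. first_argmax \<rho> I u j)"
    using assms(1,2) by (intro pred_first_argmax) auto
  then have "{u \<in> space (PiM I (\<lambda>_. lborel)). first_argmax \<rho> I u j} \<in> sets (PiM I (\<lambda>_. lborel))"
    by measurable
  moreover have "chain_configs L I B a e \<inter> {u. first_argmax \<rho> I u j}
      = chain_configs L I B a e \<inter> {u \<in> space (PiM I (\<lambda>_. lborel)). first_argmax \<rho> I u j}"
    by (auto simp: chain_configs_def)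
  ultimately show ?thesis using sets_chain_configs[OF assms(1,3)] by simp
qed

lemma emeasure_chain_configs_first_argmax:
  fixes I :: "'i set" and \<rho> :: "'i \<Rightarrow> nat"
  assumes I: "finite I" "j \<in> I"
    and B: "\<And>i. i \<in> I \<Longrightarrow> B i \<in> sets borel" "\<And>i. i \<in> I \<Longrightarrow> B i \<subseteq> {a..e}"
  defines "B' v \<equiv> \<lambda>i. B i \<inter> (if \<rho> i < \<rho> j then {..<v} else {..v})"
  shows "emeasure (PiM I (\<lambda>_. lborel)) (chain_configs L I B a e \<inter> {u. first_argmax \<rho> I u j}) =
    (\<integral>\<^sup>+v. indicator (B j \<inter> {e - L..}) v *
        emeasure (PiM (I - {j}) (\<lambda>_. lborel)) (chain_configs L (I - {j}) (B' v) a v) \<partial>lborel)"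
proof -
  have I_eq: "insert j (I - {j}) = I" using I(2) by auto
  have "emeasure (PiM (insert j (I - {j})) (\<lambda>_. lborel)) (chain_configs L I B a e \<inter> {u. first_argmax \<rho> I u j}) =
    (\<integral>\<^sup>+v. indicator (B j \<inter> {e - L..}) v *
        emeasure (PiM (I - {j}) (\<lambda>_. lborel)) (chain_configs L (I - {j}) (B' v) a v) \<partial>lborel)"
  proof (rule emeasure_PiM_insert_slice)
    show "finite (I - {j})" "j \<notin> I - {j}" using I(1) by auto
    show "B j \<inter> {e - L..} \<in> sets borel" using B(1)[OF I(2)] by auto
    show "chain_configs L I B a e \<inter> {u. first_argmax \<rho> I u j} \<in> sets (PiM (insert j (I - {j})) (\<lambda>_. lborel))"
      unfolding I_eq using I B(1) by (rule sets_chain_configs_first_argmax)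
    show "chain_configs L (I - {j}) (B' v) a v \<in> sets (PiM (I - {j}) (\<lambda>_. lborel))" for v
      using I(1) B(1) by (intro sets_chain_configs) (auto simp: B'_def)
    fix u :: "'i \<Rightarrow> real" and v :: real assume u: "u \<in> space (PiM (I - {j}) (\<lambda>_. lborel))"
    then have "u(j := v) \<in> space (PiM I (\<lambda>_. lborel))"
      using I_eq PiE_fun_upd[of v "\<lambda>_. UNIV" j u "I - {j}"] by (simp add: space_PiM)
    then have "u(j := v) \<in> chain_configs L I B a e \<inter> {u. first_argmax \<rho> I u j} \<longleftrightarrow>
        (\<forall>i\<in>I. (u(j := v)) i \<in> B i) \<and> first_argmax \<rho> I (u(j := v)) j
          \<and> arc_chain L (insert a (u(j := v) ` I)) e"
      unfolding chain_configs_def by blast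
    also have "\<dots> \<longleftrightarrow> v \<in> B j \<inter> {e - L..} \<and> (\<forall>i\<in>I - {j}. u i \<in> B' v i)
        \<and> arc_chain L (insert a (u ` (I - {j}))) v"
      unfolding B'_def by (rule chain_configs_upd_first_argmax_iff[OF I(2) B(2)])
    also have "\<dots> \<longleftrightarrow> v \<in> B j \<inter> {e - L..} \<and> u \<in> chain_configs L (I - {j}) (B' v) a v"
      using u by (simp add: chain_configs_def)
    finally show "u(j := v) \<in> chain_configs L I B a e \<inter> {u. first_argmax \<rho> I u j} \<longleftrightarrow>
        v \<in> B j \<inter> {e - L..} \<and> u \<in> chain_configs L (I - {j}) (B' v) a v" .
  qed
  then show ?thesis by (simp only: I_eq)
qed

lemma emeasure_chain_configs_split:
  fixes I :: "'i set" and \<rho> :: "'i \<Rightarrow> nat"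
  assumes I: "finite I" "I \<noteq> {}" "inj_on \<rho> I"
    and B: "\<And>i. i \<in> I \<Longrightarrow> B i \<in> sets borel" "\<And>i. i \<in> I \<Longrightarrow> B i \<subseteq> {a..e}"
  shows "emeasure (PiM I (\<lambda>_. lborel)) (chain_configs L I B a e) =
    (\<Sum>j\<in>I. \<integral>\<^sup>+v. indicator (B j \<inter> {e - L..}) v *
        emeasure (PiM (I - {j}) (\<lambda>_. lborel))
          (chain_configs L (I - {j}) (\<lambda>i. B i \<inter> (if \<rho> i < \<rho> j then {..<v} else {..v})) a v) \<partial>lborel)"
proof -
  define T where "T j = chain_configs L I B a e \<inter> {u. first_argmax \<rho> I u j}" for j
  have "chain_configs L I B a e = (\<Union>j\<in>I. T j)"
    using first_argmax_exists[OF I(1,2)] by (auto simp: T_def) metis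
  moreover have "disjoint_family_on T I"
    using first_argmax_unique[OF I(3)] by (auto simp: disjoint_family_on_def T_def)
  moreover have "T j \<in> sets (PiM I (\<lambda>_. lborel))" if "j \<in> I" for j
    unfolding T_def using I(1) that B(1) by (rule sets_chain_configs_first_argmax)
  ultimately have "emeasure (PiM I (\<lambda>_. lborel)) (chain_configs L I B a e)
      = (\<Sum>j\<in>I. emeasure (PiM I (\<lambda>_. lborel)) (T j))"
    using I(1) by (subst sum_emeasure) auto
  also have "\<dots> = (\<Sum>j\<in>I. \<integral>\<^sup>+v. indicator (B j \<inter> {e - L..}) v *
        emeasure (PiM (I - {j}) (\<lambda>_. lborel))
          (chain_configs L (I - {j}) (\<lambda>i. B i \<inter> (if \<rho> i < \<rho> j then {..<v} else {..v})) a v) \<partial>lborel)"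
    unfolding T_def using I(1) B by (intro sum.cong refl emeasure_chain_configs_first_argmax) auto
  finally show ?thesis .
qed

lemma nn_integral_power_Icc:
  fixes C c :: real
  shows "(\<integral>\<^sup>+v. ennreal ((C - v) ^ k) * indicator {c..C} v \<partial>lborel) = ennreal (max 0 (C - c) ^ (k + 1) / (k + 1))"
proof (cases "c \<le> C")
  case True
  have "(\<integral>\<^sup>+v. ennreal ((C - v) ^ k) * indicator {c..C} v \<partial>lborel)
      = ennreal (- ((C - C) ^ (k + 1) / (k + 1)) - - ((C - c) ^ (k + 1) / (k + 1)))"
  proof (rule nn_integral_FTC_Icc)
    show "((\<lambda>v. - ((C - v) ^ (k + 1) / (k + 1))) has_real_derivative (C - x) ^ k) (at x)" for x
      by (auto intro!: derivative_eq_intros simp del: of_nat_Suc) (cases k, auto simp: field_simps)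
  qed (use True in auto)
  then show ?thesis using True by simp
qed simp

text \<open>\<open>n\<close> points in \<open>[a, a + s]\<close> forming a chain from \<open>a\<close> to \<open>a + s\<close> have \<open>n + 1\<close> gaps, each at most
  \<open>L\<close>, summing to \<open>s\<close>. For \<open>s \<ge> n L\<close> the slacks \<open>L - gap\<close> range over the whole simplex of total
  \<open>(n + 1) L - s\<close>, of volume \<open>((n + 1) L - s)^n / n!\<close>, once for each of the \<open>n!\<close> orders of the points.\<close>

definition chain_volume :: "real \<Rightarrow> nat \<Rightarrow> real \<Rightarrow> real" where
  "chain_volume L n s = (if s \<le> (n + 1) * L then ((n + 1) * L - s) ^ n else 0)"

lemma nn_integral_chain_volume:
  assumes "0 < L" "real (Suc k) * L \<le> s" "{a<..<a + s} \<subseteq> B" "B \<subseteq> {a..a + s}"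
  shows "(\<integral>\<^sup>+v. indicator (B \<inter> {a + s - L..}) v * ennreal (chain_volume L k (v - a)) \<partial>lborel)
    = ennreal (chain_volume L (Suc k) s / Suc k)"
proof -
  let ?C = "a + (k + 1) * L"
  have "0 \<le> real k * L" using assms(1) by simp
  then have kL: "a \<le> a + s - L" "?C \<le> a + s" using assms(2) by (simp_all add: algebra_simps)
  have "(\<integral>\<^sup>+v. indicator (B \<inter> {a + s - L..}) v * ennreal (chain_volume L k (v - a)) \<partial>lborel)
      = (\<integral>\<^sup>+v. ennreal ((?C - v) ^ k) * indicator {a + s - L..?C} v \<partial>lborel)"
  proof (intro nn_integral_cong_AE)
    have "AE v in lborel. v \<noteq> a" "AE v in lborel. v \<noteq> a + s" by (rule AE_lborel_singleton)+
    then show "AE v in lborel. indicator (B \<inter> {a + s - L..}) v * ennreal (chain_volume L k (v - a))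
        = ennreal ((?C - v) ^ k) * indicator {a + s - L..?C} v"
    proof eventually_elim
      case (elim v)
      then have "v \<in> B \<inter> {a + s - L..} \<longleftrightarrow> a + s - L \<le> v \<and> v \<le> a + s"
        using assms(3,4) kL by force
      then show ?case using kL by (auto simp: chain_volume_def algebra_simps split: split_indicator)
    qed
  qed
  also have "\<dots> = ennreal (chain_volume L (Suc k) s / Suc k)"
    by (simp add: nn_integral_power_Icc chain_volume_def algebra_simps max_def)
  finally show ?thesis .
qed

lemma emeasure_chain_configs:
  fixes I :: "'i set"
  assumes "finite I" "card I = n" "0 < L" "real n * L \<le> s"
    and "\<And>i. i \<in> I \<Longrightarrow> B i \<in> sets borel"
      "\<And>i. i \<in> I \<Longrightarrow> {a<..<a + s} \<subseteq> B i" "\<And>i. i \<in> I \<Longrightarrow> B i \<subseteq> {a..a + s}"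
  shows "emeasure (PiM I (\<lambda>_. lborel)) (chain_configs L I B a (a + s)) = chain_volume L n s"
  using assms
proof (induction n arbitrary: I B a s)
  case 0
  then have "I = {}" by simp
  then have "chain_configs L I B a (a + s) = (if s \<le> L then {\<lambda>_. undefined} else {})"
    by (auto simp: chain_configs_def arc_chain_def PiM_empty)
  then show ?case using \<open>I = {}\<close> by (simp add: chain_volume_def PiM_empty)
next
  case (Suc k)
  note I = Suc.prems(1,2) and L = Suc.prems(3,4) and B = Suc.prems(5-7)
  obtain \<rho> :: "'i \<Rightarrow> nat" where \<rho>: "inj_on \<rho> I"
    using finite_imp_inj_to_nat_seg[OF I(1)] by blast
  let ?B = "\<lambda>j v i. B i \<inter> (if \<rho> i < \<rho> j then {..<v} else {..v})"
  have "emeasure (PiM I (\<lambda>_. lborel)) (chain_configs L I B a (a + s)) =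
    (\<Sum>j\<in>I. \<integral>\<^sup>+v. indicator (B j \<inter> {a + s - L..}) v *
        emeasure (PiM (I - {j}) (\<lambda>_. lborel)) (chain_configs L (I - {j}) (?B j v) a v) \<partial>lborel)"
    using I \<rho> B by (intro emeasure_chain_configs_split) auto
  also have "\<dots> = (\<Sum>j\<in>I. \<integral>\<^sup>+v. indicator (B j \<inter> {a + s - L..}) v * ennreal (chain_volume L k (v - a)) \<partial>lborel)"
  proof (intro sum.cong refl nn_integral_cong)
    fix j v assume j: "j \<in> I"
    have "emeasure (PiM (I - {j}) (\<lambda>_. lborel)) (chain_configs L (I - {j}) (?B j v) a (a + (v - a)))
        = chain_volume L k (v - a)" if v: "v \<in> B j \<inter> {a + s - L..}"
    proof (rule Suc.IH)
      show "finite (I - {j})" "card (I - {j}) = k" using I j by auto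
      show "real k * L \<le> v - a" using v L by (simp add: algebra_simps)
      have "a \<le> v" "v \<le> a + s" using v B(3)[OF j] by auto
      fix i assume i: "i \<in> I - {j}"
      show "?B j v i \<in> sets borel" using B(1) i by auto
      show "{a<..<a + (v - a)} \<subseteq> ?B j v i" "?B j v i \<subseteq> {a..a + (v - a)}"
        using B(2,3)[of i] i \<open>a \<le> v\<close> \<open>v \<le> a + s\<close> by auto
    qed (use L in auto)
    then show "indicator (B j \<inter> {a + s - L..}) v *
        emeasure (PiM (I - {j}) (\<lambda>_. lborel)) (chain_configs L (I - {j}) (?B j v) a v) =
        indicator (B j \<inter> {a + s - L..}) v * ennreal (chain_volume L k (v - a))"
      by (simp split: split_indicator)
  qed
  also have "\<dots> = (\<Sum>j\<in>I. ennreal (chain_volume L (Suc k) s / Suc k))"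
    using L B(2,3) by (intro sum.cong refl nn_integral_chain_volume) auto
  also have "\<dots> = chain_volume L (Suc k) s"
    using I by (simp add: ennreal_of_nat_eq_real_of_nat ennreal_mult'[symmetric] del: of_nat_Suc)
  finally show ?case .
qed

section \<open>Rotation invariance of the unit cube\<close>

lemma nn_integral_lborel_shift:
  fixes f :: "real \<Rightarrow> ennreal"
  assumes [measurable]: "f \<in> borel_measurable borel"
  shows "(\<integral>\<^sup>+v. f (v - b) \<partial>lborel) = (\<integral>\<^sup>+v. f v \<partial>lborel)"
  using nn_integral_real_affine[OF assms, of 1 "-b"] by simp

lemma nn_integral_unit_interval_frac_shift:
  fixes f :: "real \<Rightarrow> ennreal"
  assumes [measurable]: "f \<in> borel_measurable borel"
  shows "(\<integral>\<^sup>+v. indicator {0..<1} v * f (frac (v - a)) \<partial>lborel) = (\<integral>\<^sup>+v. indicator {0..<1} v * f v \<partial>lborel)"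
proof -
  define b where "b = frac a"
  have b: "0 \<le> b" "b < 1" by (auto simp: b_def frac_lt_1)
  have "(\<integral>\<^sup>+v. indicator {0..<1} v * f (frac (v - a)) \<partial>lborel)
      = (\<integral>\<^sup>+v. indicator {b..<1} v * f (v - b) + indicator {0..<b} v * f (v - b + 1) \<partial>lborel)"
  proof (rule nn_integral_cong)
    fix v :: real
    have "frac (v - a) = frac (v - b)" unfolding b_def by (simp add: frac_diff_simp)
    moreover have "frac (v - b) = v - b" if "b \<le> v" "v < 1" using that b by (simp add: frac_eq)
    moreover have "frac (v - b) = v - b + 1" if "0 \<le> v" "v < b"
      using that b frac_1_eq[of "v - b"] by (simp add: frac_eq)
    ultimately show "indicator {0..<1} v * f (frac (v - a)) = indicator {b..<1} v * f (v - b) + indicator {0..<b} v * f (v - b + 1)"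
      using b by (auto simp: indicator_def)
  qed
  also have "\<dots> = (\<integral>\<^sup>+v. indicator {b..<1} v * f (v - b) \<partial>lborel) + (\<integral>\<^sup>+v. indicator {0..<b} v * f (v - b + 1) \<partial>lborel)"
    by (rule nn_integral_add) auto
  also have "(\<integral>\<^sup>+v. indicator {b..<1} v * f (v - b) \<partial>lborel) = (\<integral>\<^sup>+v. indicator {0..<1-b} v * f v \<partial>lborel)"
    using nn_integral_lborel_shift[of "\<lambda>v. indicator {0..<1-b} v * f v" b]
    by (simp add: indicator_def algebra_simps)
  also have "(\<integral>\<^sup>+v. indicator {0..<b} v * f (v - b + 1) \<partial>lborel) = (\<integral>\<^sup>+v. indicator {1-b..<1} v * f v \<partial>lborel)"
    using nn_integral_lborel_shift[of "\<lambda>v. indicator {1-b..<1} v * f v" "b - 1"]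
    by (simp add: indicator_def algebra_simps)
  also have "(\<integral>\<^sup>+v. indicator {0..<1-b} v * f v \<partial>lborel) + (\<integral>\<^sup>+v. indicator {1-b..<1} v * f v \<partial>lborel)
      = (\<integral>\<^sup>+v. indicator {0..<1} v * f v \<partial>lborel)"
    using b by (subst nn_integral_add[symmetric]) (auto intro!: nn_integral_cong simp: indicator_def)
  finally show ?thesis .
qed

lemma borel_measurable_frac [measurable]: "(frac :: real \<Rightarrow> real) \<in> borel_measurable borel"
  unfolding frac_def by measurable

lemma nn_integral_PiM_unit_cube_frac_shift:
  fixes f :: "('i \<Rightarrow> real) \<Rightarrow> ennreal"
  assumes "finite I" and "f \<in> borel_measurable (PiM I (\<lambda>_. lborel))"
  shows "(\<integral>\<^sup>+w. (\<Prod>i\<in>I. indicator {0..<1} (w i)) * f (\<lambda>i\<in>I. frac (w i - a)) \<partial>PiM I (\<lambda>_. lborel))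
       = (\<integral>\<^sup>+w. (\<Prod>i\<in>I. indicator {0..<1} (w i)) * f w \<partial>PiM I (\<lambda>_. lborel))"
  using assms
proof (induction I arbitrary: f rule: finite_induct)
  case empty
  then show ?case by (simp add: PiM_empty nn_integral_count_space_finite)
next
  case (insert j I)
  interpret product_sigma_finite "\<lambda>_::'i. lborel :: real measure" by standard
  note [measurable] = insert.prems
  let ?box = "\<lambda>w. \<Prod>i\<in>I. indicator {0..<1} (w i) :: ennreal"
  have upd: "(\<lambda>i\<in>insert j I. frac ((w(j := v)) i - a)) = (\<lambda>i\<in>I. frac (w i - a))(j := frac (v - a))"
    for w :: "'i \<Rightarrow> real" and v using insert.hyps by (auto simp: fun_eq_iff)
  have box: "(\<Prod>i\<in>insert j I. indicator {0..<1} ((w(j := v)) i)) = indicator {0..<1} v * ?box w"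
    for w :: "'i \<Rightarrow> real" and v
  proof -
    have "(\<Prod>i\<in>I. indicator {0..<1} ((w(j := v)) i)) = ?box w"
      using insert.hyps by (intro prod.cong) auto
    then show ?thesis using insert.hyps by simp
  qed
  define F where "F t = (\<integral>\<^sup>+w. ?box w * f (w(j := t)) \<partial>PiM I (\<lambda>_. lborel))" for t
  interpret PiM_I: finite_product_sigma_finite "\<lambda>_::'i. lborel :: real measure" I
    by standard (use insert.hyps in auto)
  have [measurable]: "F \<in> borel_measurable borel" unfolding F_def by measurable
  have "(\<integral>\<^sup>+w. (\<Prod>i\<in>insert j I. indicator {0..<1} (w i)) * f (\<lambda>i\<in>insert j I. frac (w i - a)) \<partial>PiM (insert j I) (\<lambda>_. lborel))
      = (\<integral>\<^sup>+v. indicator {0..<1} v * (\<integral>\<^sup>+w. ?box w * f ((\<lambda>i\<in>I. frac (w i - a))(j := frac (v - a))) \<partial>PiM I (\<lambda>_. lborel)) \<partial>lborel)"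
    using insert.hyps
    by (subst product_nn_integral_insert_rev, measurable)
      (simp only: upd box, auto intro!: nn_integral_cong split: split_indicator)
  also have "\<dots> = (\<integral>\<^sup>+v. indicator {0..<1} v * F (frac (v - a)) \<partial>lborel)"
    unfolding F_def by (intro nn_integral_cong arg_cong2[where f = "(*)"] refl insert.IH) measurable
  also have "\<dots> = (\<integral>\<^sup>+v. indicator {0..<1} v * F v \<partial>lborel)"
    by (rule nn_integral_unit_interval_frac_shift) measurable
  also have "\<dots> = (\<integral>\<^sup>+w. (\<Prod>i\<in>insert j I. indicator {0..<1} (w i)) * f w \<partial>PiM (insert j I) (\<lambda>_. lborel))"
    using insert.hyps unfolding F_def
    by (subst product_nn_integral_insert_rev, measurable)
      (simp only: box, auto intro!: nn_integral_cong split: split_indicator)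
  finally show ?case .
qed


lemma sets_PiM_unit_cube:
  fixes I :: "'i set"
  assumes "finite I"
  shows "{w \<in> space (PiM I (\<lambda>_. lborel)). \<forall>i\<in>I. w i \<in> {0..<1::real}} \<in> sets (PiM I (\<lambda>_. lborel))"
proof -
  have "{w \<in> space (PiM I (\<lambda>_. lborel)). \<forall>i\<in>I. w i \<in> {0..<1::real}} = PiE I (\<lambda>_. {0..<1})"
    by (auto simp: space_PiM PiE_def)
  moreover have "PiE I (\<lambda>_. {0..<1::real}) \<in> sets (PiM I (\<lambda>_. lborel))"
    using assms by (intro sets_PiM_I_finite) auto
  ultimately show ?thesis by simp
qed

lemma sets_PiM_unit_cube_frac_shift:
  fixes I :: "'i set" and S :: "('i \<Rightarrow> real) set"
  assumes "finite I" and S: "S \<in> sets (PiM I (\<lambda>_. lborel))"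
  shows "{w \<in> space (PiM I (\<lambda>_. lborel)). (\<forall>i\<in>I. w i \<in> {0..<1}) \<and> (\<lambda>i\<in>I. frac (w i - a)) \<in> S}
    \<in> sets (PiM I (\<lambda>_. lborel))"
proof -
  let ?M = "PiM I (\<lambda>_. lborel :: real measure)"
  have "(\<lambda>w. \<lambda>i\<in>I. frac (w i - a)) \<in> measurable ?M ?M" by measurable
  then have "{w \<in> space ?M. (\<lambda>i\<in>I. frac (w i - a)) \<in> S} \<in> sets ?M"
    using S by measurable
  then show ?thesis
    using sets_PiM_unit_cube[OF assms(1)] by (auto simp: Collect_conj_eq[symmetric] Int_def)
qed

lemma emeasure_PiM_unit_cube_frac_shift:
  fixes I :: "'i set" and S :: "('i \<Rightarrow> real) set"
  assumes "finite I" and S: "S \<in> sets (PiM I (\<lambda>_. lborel))"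
  shows "emeasure (PiM I (\<lambda>_. lborel))
      {w \<in> space (PiM I (\<lambda>_. lborel)). (\<forall>i\<in>I. w i \<in> {0..<1}) \<and> (\<lambda>i\<in>I. frac (w i - a)) \<in> S}
    = emeasure (PiM I (\<lambda>_. lborel)) {w \<in> space (PiM I (\<lambda>_. lborel)). (\<forall>i\<in>I. w i \<in> {0..<1}) \<and> w \<in> S}"
    (is "emeasure ?M ?X = emeasure _ ?Y")
proof -
  have indicator: "indicator {w \<in> space ?M. (\<forall>i\<in>I. w i \<in> {0..<1}) \<and> g w \<in> S} w
      = (\<Prod>i\<in>I. indicator {0..<1} (w i)) * (indicator S (g w) :: ennreal)"
    if "w \<in> space ?M" for g w
    using that \<open>finite I\<close> by (auto split: split_indicator)
  have "?Y = {w \<in> space ?M. \<forall>i\<in>I. w i \<in> {0..<1}} \<inter> S"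
    using sets.sets_into_space[OF S] by blast
  then have Y: "?Y \<in> sets ?M" using sets_PiM_unit_cube[OF assms(1)] S by simp
  have "emeasure ?M ?X = (\<integral>\<^sup>+w. indicator ?X w \<partial>?M)"
    using sets_PiM_unit_cube_frac_shift[OF assms] by simp
  also have "\<dots> = (\<integral>\<^sup>+w. (\<Prod>i\<in>I. indicator {0..<1} (w i)) * indicator S (\<lambda>i\<in>I. frac (w i - a)) \<partial>?M)"
    by (intro nn_integral_cong indicator)
  also have "\<dots> = (\<integral>\<^sup>+w. (\<Prod>i\<in>I. indicator {0..<1} (w i)) * indicator S w \<partial>?M)"
    using assms by (intro nn_integral_PiM_unit_cube_frac_shift) auto
  also have "\<dots> = (\<integral>\<^sup>+w. indicator ?Y w \<partial>?M)"
    using indicator[of _ "\<lambda>w. w"] by (intro nn_integral_cong) simp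
  also have "\<dots> = emeasure ?M ?Y"
    using Y by simp
  finally show ?thesis .
qed

section \<open>The torus\<close>

lemma arcs_cover_circle_iff_arc_chain_from_min:
  assumes "finite I" "\<forall>i\<in>I. u i \<in> {0..<1}"
  shows "arcs_cover_circle L (u ` I) \<longleftrightarrow>
    (\<exists>j\<in>I. (\<forall>i\<in>I. u j \<le> u i) \<and> arc_chain L (insert (u j) (u ` I)) (u j + 1))"
proof -
  have iff: "arcs_cover_circle L (u ` I) \<longleftrightarrow> arc_chain L (insert (u j) (u ` I)) (u j + 1)"
    if "j \<in> I" "\<forall>i\<in>I. u j \<le> u i" for j
  proof -
    have "\<forall>p\<in>u ` I. u j \<le> p \<and> p < u j + 1"
      using that assms(2) by (smt (verit) atLeastLessThan_iff imageE)
    then show ?thesis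
      using that assms(1) by (subst arcs_cover_circle_iff_arc_chain[of _ "u j"]) (auto simp: insert_absorb)
  qed
  show ?thesis
  proof
    assume cover: "arcs_cover_circle L (u ` I)"
    then have "I \<noteq> {}" by (auto simp: arcs_cover_circle_def)
    then have "Min (u ` I) \<in> u ` I" using assms(1) by simp
    then obtain j where "j \<in> I" "u j = Min (u ` I)" by auto
    then have "j \<in> I" "\<forall>i\<in>I. u j \<le> u i" using assms(1) by auto
    then show "\<exists>j\<in>I. (\<forall>i\<in>I. u j \<le> u i) \<and> arc_chain L (insert (u j) (u ` I)) (u j + 1)"
      using iff cover by blast
  qed (use iff in blast)
qed

lemma pred_unit_cube_arcs_cover:
  assumes "finite I" and [measurable]: "\<And>i. i \<in> I \<Longrightarrow> (\<lambda>x. f x i) \<in> borel_measurable M"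
  shows "Measurable.pred M (\<lambda>x. (\<forall>i\<in>I. f x i \<in> {0..<1}) \<and> arcs_cover_circle L (f x ` I))"
proof -
  have [measurable]: "j \<in> I \<Longrightarrow> Measurable.pred M (\<lambda>x. arc_chain L (insert (f x j) (f x ` I)) (f x j + 1))" for j
    using assms by (intro pred_arc_chain_insert) auto
  have "Measurable.pred M (\<lambda>x. (\<forall>i\<in>I. f x i \<in> {0..<1}) \<and>
      (\<exists>j\<in>I. (\<forall>i\<in>I. f x j \<le> f x i) \<and> arc_chain L (insert (f x j) (f x ` I)) (f x j + 1)))"
    using \<open>finite I\<close> by measurable
  then show ?thesis
    by (rule measurable_cong[THEN iffD1, rotated]) (use arcs_cover_circle_iff_arc_chain_from_min[OF \<open>finite I\<close>] in blast)
qed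

lemma arcs_cover_circle_insert_iff_chain_configs:
  fixes u :: "'i \<Rightarrow> real"
  assumes "finite J"
  shows "arcs_cover_circle L (insert a (u ` J))
    \<longleftrightarrow> (\<lambda>i\<in>J. frac (u i - a)) \<in> chain_configs L J (\<lambda>_. {0..<1}) 0 1"
proof -
  let ?w = "\<lambda>i\<in>J. frac (u i - a)"
  have "arcs_cover_circle L (insert a (u ` J)) \<longleftrightarrow> arcs_cover_circle L (insert 0 (?w ` J))"
    by (subst arcs_cover_circle_frac_shift[where a = a, symmetric]) (simp add: image_image)
  also have "\<dots> \<longleftrightarrow> arc_chain L (insert 0 (?w ` J)) (0 + 1)"
    using assms by (intro arcs_cover_circle_iff_arc_chain) (auto simp: frac_lt_1)
  also have "\<dots> \<longleftrightarrow> ?w \<in> chain_configs L J (\<lambda>_. {0..<1}) 0 1"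
    by (auto simp: chain_configs_def space_PiM frac_lt_1)
  finally show ?thesis .
qed

lemma emeasure_PiM_unit_cube_arcs_cover:
  fixes I :: "'i set"
  assumes "finite I" "card I = Suc n" "0 < L" "real n * L \<le> 1"
  shows "emeasure (PiM I (\<lambda>_. lborel))
      {u \<in> space (PiM I (\<lambda>_. lborel)). (\<forall>i\<in>I. u i \<in> {0..<1}) \<and> arcs_cover_circle L (u ` I)}
    = chain_volume L n 1"
    (is "emeasure _ ?X = _")
proof -
  obtain j where j: "j \<in> I" using assms(2) by fastforce
  define J where "J = I - {j}"
  have J: "finite J" "j \<notin> J" "card J = n" "insert j J = I"
    using assms(1,2) j by (auto simp: J_def)
  let ?M = "PiM J (\<lambda>_. lborel :: real measure)"
  define C where "C = chain_configs L J (\<lambda>_. {0..<1}) 0 1"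
  have C: "C \<in> sets ?M" using J(1) by (simp add: C_def sets_chain_configs)
  have "emeasure (PiM (insert j J) (\<lambda>_. lborel)) ?X = (\<integral>\<^sup>+a. indicator {0..<1} a *
      emeasure ?M {w \<in> space ?M. (\<forall>i\<in>J. w i \<in> {0..<1}) \<and> (\<lambda>i\<in>J. frac (w i - a)) \<in> C} \<partial>lborel)"
  proof (rule emeasure_PiM_insert_slice)
    show "?X \<in> sets (PiM (insert j J) (\<lambda>_. lborel))"
      unfolding J(4) using assms(1) by (intro predE pred_unit_cube_arcs_cover) auto
    show "{w \<in> space ?M. (\<forall>i\<in>J. w i \<in> {0..<1}) \<and> (\<lambda>i\<in>J. frac (w i - a)) \<in> C} \<in> sets ?M" for a
      using J(1) C by (rule sets_PiM_unit_cube_frac_shift)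
    fix u a assume u: "u \<in> space ?M"
    have "u(j := a) ` I = insert a (u ` J)" using J(2,4) by auto
    moreover have "u(j := a) \<in> space (PiM I (\<lambda>_. lborel))"
      using u J(4) PiE_fun_upd[of a "\<lambda>_. UNIV" j u J] by (simp add: space_PiM)
    ultimately show "u(j := a) \<in> ?X \<longleftrightarrow>
        a \<in> {0..<1} \<and> u \<in> {w \<in> space ?M. (\<forall>i\<in>J. w i \<in> {0..<1}) \<and> (\<lambda>i\<in>J. frac (w i - a)) \<in> C}"
      using u J(2,4) arcs_cover_circle_insert_iff_chain_configs[OF J(1), of L a u] by (auto simp: C_def)
  qed (use J in auto)
  also have "\<dots> = (\<integral>\<^sup>+a. indicator {0..<1::real} a * emeasure ?M C \<partial>lborel)"
  proof -
    have "{w \<in> space ?M. (\<forall>i\<in>J. w i \<in> {0..<1}) \<and> w \<in> C} = C"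
      by (auto simp: C_def chain_configs_def)
    then show ?thesis
      using emeasure_PiM_unit_cube_frac_shift[OF J(1) C] by simp
  qed
  also have "emeasure ?M C = chain_volume L n 1"
  proof -
    have "emeasure ?M (chain_configs L J (\<lambda>_. {0..<1}) 0 (0 + 1)) = chain_volume L n 1"
      using J assms(3,4) by (intro emeasure_chain_configs) auto
    then show ?thesis by (simp add: C_def)
  qed
  finally show ?thesis using J(4) by (simp add: nn_integral_cmult_indicator mult.commute)
qed

lemma emeasure_lborel_eq_PiM_Basis:
  fixes X :: "'a::euclidean_space set"
  assumes "{f \<in> space (PiM Basis (\<lambda>_. lborel)). (\<Sum>b\<in>Basis. f b *\<^sub>R b) \<in> X} \<in> sets (PiM Basis (\<lambda>_. lborel))"
  shows "emeasure lborel X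
    = emeasure (PiM Basis (\<lambda>_. lborel)) {f \<in> space (PiM Basis (\<lambda>_. lborel)). (\<Sum>b\<in>Basis. f b *\<^sub>R b) \<in> X}"
    (is "_ = emeasure ?M ?Y")
proof -
  have coords: "(\<lambda>x. \<lambda>b\<in>Basis. x \<bullet> b) \<in> measurable borel ?M"
    by (intro measurable_restrict) (auto intro: borel_measurable_continuous_onI continuous_intros)
  have "X = (\<lambda>x. \<lambda>b\<in>Basis. x \<bullet> b) -` ?Y \<inter> space borel"
    by (auto simp: space_PiM euclidean_representation)
  then have X: "X \<in> sets borel"
    using measurable_sets[OF coords assms] by simp
  have "emeasure lborel X = emeasure (distr ?M borel (\<lambda>f. \<Sum>b\<in>Basis. f b *\<^sub>R b)) X"
    by (simp add: lborel_eq[symmetric])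
  also have "\<dots> = emeasure ?M ?Y"
    using X by (subst emeasure_distr) (auto simp: Int_def conj_commute)
  finally show ?thesis .
qed

lemma vec_sum_Basis_component:
  fixes f :: "(real^'n) \<Rightarrow> real"
  shows "(\<Sum>b\<in>Basis. f b *\<^sub>R b) $ t = f (axis t 1)"
proof -
  have axis: "axis t (1::real) \<in> Basis" by (auto simp: Basis_vec_def)
  have "(\<Sum>b\<in>Basis. f b *\<^sub>R b) $ t = (\<Sum>b\<in>Basis. f b *\<^sub>R b) \<bullet> axis t 1"
    by (simp only: inner_axis) simp
  also have "\<dots> = (\<Sum>b\<in>Basis. f b * (b \<bullet> axis t 1))"
    by (simp add: inner_sum_left)
  also have "\<dots> = (\<Sum>b\<in>Basis. if b = axis t 1 then f b else 0)"
    using axis by (intro sum.cong refl) (simp add: inner_Basis)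
  finally show ?thesis using axis by simp
qed

lemma measure_torus_cover_set:
  assumes "0 \<le> y" "y < 1"
  shows "measure lborel (torus_cover_set y :: (real^'n) set) = (y / (real CARD('n) - y)) ^ (CARD('n) - 1)"
proof -
  define n where "n = CARD('n) - 1"
  define L where "L = arc_len CARD('n) y"
  have card: "card (Basis :: (real^'n) set) = Suc n" by (simp add: n_def)
  have r: "real CARD('n) = real n + 1" by (simp add: n_def)
  have L: "0 < L" "real n * L \<le> 1" "chain_volume L n 1 = (y / (real CARD('n) - y)) ^ n"
    using assms by (auto simp: L_def arc_len_def r chain_volume_def field_simps)
  let ?\<phi> = "\<lambda>f. \<Sum>b\<in>Basis. f b *\<^sub>R b :: real^'n"
  have Basis: "(Basis :: (real^'n) set) = range (\<lambda>t. axis t 1)" by (auto simp: Basis_vec_def)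
  have "?\<phi> f \<in> torus_cover_set y \<longleftrightarrow> (\<forall>b\<in>Basis. f b \<in> {0..<1}) \<and> arcs_cover_circle L (f ` Basis)" for f
    unfolding torus_cover_set_def mem_Collect_eq arcs_cover_iff_arcs_cover_circle vec_sum_Basis_component
    by (simp add: L_def Basis image_image)
  then have preimage: "{f \<in> space (PiM Basis (\<lambda>_. lborel)). ?\<phi> f \<in> torus_cover_set y} =
      {f \<in> space (PiM Basis (\<lambda>_. lborel)). (\<forall>b\<in>Basis. f b \<in> {0..<1}) \<and> arcs_cover_circle L (f ` Basis)}"
    by blast
  have "{f \<in> space (PiM Basis (\<lambda>_. lborel)). ?\<phi> f \<in> torus_cover_set y} \<in> sets (PiM Basis (\<lambda>_. lborel))"
    unfolding preimage by (intro predE pred_unit_cube_arcs_cover) auto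
  then have "emeasure lborel (torus_cover_set y :: (real^'n) set)
      = emeasure (PiM Basis (\<lambda>_. lborel)) {f \<in> space (PiM Basis (\<lambda>_. lborel)). ?\<phi> f \<in> torus_cover_set y}"
    by (rule emeasure_lborel_eq_PiM_Basis)
  also have "\<dots> = chain_volume L n 1"
    unfolding preimage using finite_Basis card L(1,2) by (rule emeasure_PiM_unit_cube_arcs_cover)
  finally have "emeasure lborel (torus_cover_set y :: (real^'n) set) = chain_volume L n 1" .
  moreover have "0 \<le> y / (real CARD('n) - y)" using assms r by simp
  ultimately show ?thesis using L by (simp add: measure_def n_def)
qed

theorem lemma5p2:
  assumes "CARD('n::finite) \<ge> 3"
  shows "(\<lambda>y. measure lborel (torus_cover_set y :: (real^'n) set))
           \<sim>[at_right 0] (\<lambda>y. y ^ (CARD('n) - 1) / (real CARD('n) - y) ^ (CARD('n) - 1))"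
proof (rule asymp_equiv_refl_ev)
  \<comment> \<open>the formula is exact for every \<open>r\<close>\<close>
  have "eventually (\<lambda>y. y \<in> {0<..<1}) (at_right (0::real))"
    by (rule eventually_at_right_real) simp
  then show "eventually (\<lambda>y. measure lborel (torus_cover_set y :: (real^'n) set) =
      y ^ (CARD('n) - 1) / (real CARD('n) - y) ^ (CARD('n) - 1)) (at_right 0)"
    by eventually_elim (simp add: measure_torus_cover_set power_divide)
qed

end
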